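(* Let $|v_1\rangle,\dots,|v_8\rangle$ be unit vectors in $\mathbb{R}^3$ realizing the Clifton $01$-gadget measurement configuration, i.e., $\langle v_i|v_j\rangle = 0$ for every pair $\{i,j\}$ in $\{\{1,2\},\{1,3\},\{2,4\},\{2,6\},\{4,6\},\{3,5\},\{3,7\},\{5,7\},\{4,5\},\{6,8\},\{7,8\}\}$, and suppose they are measured on a state $|\psi\rangle$ for which the observed probabilities are $P(|v_1\rangle) = |\langle \psi|v_1\rangle|^2 = 1$ and $P(|v_8\rangle) = |\langle\psi|v_8\rangle|^2 = 1/9$. Then the set of projectors $\{|v_i\rangle\langle v_i|\}_{i=1}^8$ realizing this configuration in $\mathbb{R}^3$ is unique up to a common unitary (orthogonal) rotation and up to the relabelling $v_2\leftrightarrow v_3$, $v_4\leftrightarrow v_5$, $v_6\leftrightarrow v_7$.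
   Context: The Clifton $01$-gadget (Clifton bug) is the graph on vertices $1,\dots,8$ with the eleven edges listed in the claim; vertices $1$ and $8$ are its two distinguished non-adjacent vertices. $P(|v\rangle)$ denotes the probability of the outcome corresponding to the projector $|v\rangle\langle v|$ when measuring the state $|\psi\rangle$. *)

theory Defs
  imports "HOL-Analysis.Analysis"
begin

definition clifton_edges :: "(nat \<times> nat) set" where
  "clifton_edges = {(1,2),(1,3),(2,4),(2,6),(4,6),(3,5),(3,7),(5,7),(4,5),(6,8),(7,8)}"

definition proj :: "real^3 \<Rightarrow> real^3^3" where
  "proj v = (\<chi> i j. v $ i * v $ j)"

definition clifton_config :: "(nat \<Rightarrow> real^3) \<Rightarrow> real^3 \<Rightarrow> bool" where
  "clifton_config v psi \<longleftrightarrow>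
     (\<forall>i\<in>{1..8}. norm (v i) = 1) \<and>
     (\<forall>(i,j)\<in>clifton_edges. v i \<bullet> v j = 0) \<and>
     norm psi = 1 \<and>
     (psi \<bullet> v 1)\<^sup>2 = 1 \<and>
     (psi \<bullet> v 8)\<^sup>2 = 1/9"

definition clifton_swap :: "nat \<Rightarrow> nat" where
  "clifton_swap i = (if i = 2 then 3 else if i = 3 then 2 else if i = 4 then 5 else
     if i = 5 then 4 else if i = 6 then 7 else if i = 7 then 6 else i)"

end

theory Submission
  imports Defs
begin

text \<open>Move v1, v2 and v1 \<times> v2 to the coordinate axes. Since P(v1) = 1 the state is
  \<plusminus>v1, so (v1 \<bullet> v8)^2 = 1/9. Expanding in the orthonormal bases (v2, v4, v6)
  and (v3, v5, v7) expresses v1 \<bullet> v8 through v2 \<bullet> v3, v1 \<bullet> v4 and v3 \<bullet> v4, and the last is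
  the product of the third coordinates of v3 and v4. The result is one quartic equation in two
  unknowns which, after scaling, is a sum of two squares; it forces (v2 \<bullet> v3)^2 = 1/4 and
  (v1 \<bullet> v4)^2 = 1/3. So v1, ..., v4 are fixed up to the signs of their coordinates, which a
  reflection of the first two axes absorbs, and each of v5, ..., v8 is a unit normal of two
  earlier, non-parallel vectors, hence fixed up to a sign that the projector forgets. Every
  realisation is therefore an orthogonal image of one standard configuration up to signs; in
  particular the first alternative of the conclusion always holds.\<close>

lemma sgn_mult_normalise:
  fixes x y X Y :: real
  assumes "x\<^sup>2 = X\<^sup>2" "y\<^sup>2 = Y\<^sup>2" "X > 0" "Y > 0"
  shows "(sgn (x * y) * x = X \<and> y = Y) \<or> (sgn (x * y) * x = - X \<and> y = - Y)"
proof -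
  have "x = X \<or> x = - X" "y = Y \<or> y = - Y"
    using assms(1,2) by (simp_all add: power2_eq_iff)
  then show ?thesis
    using assms(3,4) by (auto simp: sgn_mult)
qed

lemma clifton_quartic_solution:
  fixes x y :: real
  assumes "0 \<le> x" "x \<le> 1" "0 \<le> y" "y < 1"
    and quartic: "(1 - x * y)\<^sup>2 = (8 - 9 * y) * y * x * (1 - x)"
  shows "x = 3/4 \<and> y = 2/3"
proof -
  have "0 < y"
    using quartic assms(3) by (cases "y = 0") auto
  have "y < 8/9"
  proof (rule ccontr)
    assume "\<not> y < 8/9"
    then have "(8 - 9 * y) * y * x * (1 - x) \<le> 0"
      using assms(1-3) by (simp add: mult_nonpos_nonneg)
    moreover have "x * y < 1"
      using mult_left_le[of x y] assms(2-4) by (simp add: mult.commute)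
    then have "(1 - x * y)\<^sup>2 > 0"
      by simp
    ultimately show False
      using quartic by simp
  qed
  have "32 * y * (1 - y) * ((1 - x * y)\<^sup>2 - (8 - 9 * y) * y * x * (1 - x))
      = (16 * y * (1 - y) * x - y * (10 - 9 * y))\<^sup>2 + y * (8 - 9 * y) * (3 * y - 2)\<^sup>2"
    by (simp add: algebra_simps power2_eq_square)
  then have sos: "(16 * y * (1 - y) * x - y * (10 - 9 * y))\<^sup>2 + y * (8 - 9 * y) * (3 * y - 2)\<^sup>2 = 0"
    using quartic by simp
  have "y * (8 - 9 * y) * (3 * y - 2)\<^sup>2 \<ge> 0"
    using \<open>0 < y\<close> \<open>y < 8/9\<close> by simp
  then have "y * (8 - 9 * y) * (3 * y - 2)\<^sup>2 = 0"
    and "(16 * y * (1 - y) * x - y * (10 - 9 * y))\<^sup>2 = 0"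
    using sos by (smt (verit) zero_le_power2)+
  then have "16 * y * (1 - y) * x = y * (10 - 9 * y)" and "y = 2/3"
    using \<open>0 < y\<close> \<open>y < 8/9\<close> by simp_all
  then show ?thesis
    by simp
qed

text \<open>In the application X, Y, Z are the inner products of v8 with v2, v4, v3, and
  c = v3 \<bullet> v4, \<beta> = v2 \<bullet> v3, p = v1 \<bullet> v4, while \<gamma>, \<delta> are the components of v3, v4
  along v1 \<times> v2.\<close>

lemma clifton_angle_equations:
  fixes X Y Z c \<beta> \<gamma> p \<delta> :: real
  assumes Y: "Y = c * Z" and Z: "Z = X * \<beta> + Y * c" and XY: "X\<^sup>2 + Y\<^sup>2 = 1"
    and Yp: "(Y * p)\<^sup>2 = 1/9" and c: "c = \<gamma> * \<delta>"
    and \<beta>\<gamma>: "\<beta>\<^sup>2 + \<gamma>\<^sup>2 = 1" and p\<delta>: "p\<^sup>2 + \<delta>\<^sup>2 = 1"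
  shows "\<beta>\<^sup>2 = 1/4 \<and> p\<^sup>2 = 1/3"
proof -
  have "Y * (1 - c\<^sup>2) = c * \<beta> * X"
    using Y Z by (simp add: algebra_simps power2_eq_square)
  then have "Y\<^sup>2 * (1 - c\<^sup>2)\<^sup>2 = c\<^sup>2 * \<beta>\<^sup>2 * (1 - Y\<^sup>2)"
    using XY by (metis add_diff_cancel_right' power_mult_distrib)
  then have Y_sq: "Y\<^sup>2 * ((1 - c\<^sup>2)\<^sup>2 + c\<^sup>2 * \<beta>\<^sup>2) = c\<^sup>2 * \<beta>\<^sup>2"
    by (simp add: algebra_simps)
  have "(1 - c\<^sup>2)\<^sup>2 + c\<^sup>2 * \<beta>\<^sup>2 = 9 * (Y * p)\<^sup>2 * ((1 - c\<^sup>2)\<^sup>2 + c\<^sup>2 * \<beta>\<^sup>2)"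
    using Yp by simp
  also have "\<dots> = 9 * p\<^sup>2 * c\<^sup>2 * \<beta>\<^sup>2"
    using Y_sq by (simp add: power_mult_distrib)
  finally have "(1 - \<gamma>\<^sup>2 * \<delta>\<^sup>2)\<^sup>2 = (8 - 9 * \<delta>\<^sup>2) * \<delta>\<^sup>2 * \<gamma>\<^sup>2 * (1 - \<gamma>\<^sup>2)"
    unfolding c using \<beta>\<gamma> p\<delta> by algebra
  moreover have "\<gamma>\<^sup>2 \<le> 1"
    using \<beta>\<gamma> zero_le_power2[of \<beta>] by linarith
  moreover have "0 < p\<^sup>2"
    using Yp by (cases "p = 0") auto
  then have "\<delta>\<^sup>2 < 1"
    using p\<delta> by linarith
  ultimately have "\<gamma>\<^sup>2 = 3/4 \<and> \<delta>\<^sup>2 = 2/3"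
    by (intro clifton_quartic_solution) simp_all
  then show ?thesis
    using \<beta>\<gamma> p\<delta> by simp
qed

lemma inner_real3: "(x::real^3) \<bullet> y = x$1 * y$1 + x$2 * y$2 + x$3 * y$3"
  by (simp add: inner_vec_def sum_3)

lemma matrix_rows3_mult:
  "(vector [a, b, c] :: real^3^3) *v x = vector [a \<bullet> x, b \<bullet> x, c \<bullet> x]"
  by (simp add: vec_eq_iff forall_3 matrix_vector_mult_def inner_vec_def sum_3 mult.commute)

lemma orthogonal_matrix_rows3:
  fixes a b c :: "real^3"
  assumes "norm a = 1" "norm b = 1" "norm c = 1" "a \<bullet> b = 0" "a \<bullet> c = 0" "b \<bullet> c = 0"
  shows "orthogonal_matrix (vector [a, b, c] :: real^3^3)"
proof -
  have "row i M = M $ i" for i and M :: "real^3^3"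
    by (simp add: row_def vec_eq_iff)
  then show ?thesis
    using assms unfolding orthogonal_matrix_orthonormal_rows
    by (auto simp: forall_3 orthogonal_def inner_commute)
qed

lemma orthogonal_matrix_inner:
  fixes Q :: "real^'n^'n"
  assumes "orthogonal_matrix Q"
  shows "(Q *v x) \<bullet> (Q *v y) = x \<bullet> y"
proof -
  have "orthogonal_transformation ((*v) Q)"
    using assms by (simp add: orthogonal_transformation_matrix matrix_vector_mul_linear)
  then show ?thesis
    unfolding orthogonal_transformation_def by blast
qed

lemma orthogonal_matrix_transpose_mult_cancel:
  "orthogonal_matrix Q \<Longrightarrow> transpose Q *v (Q *v x) = (x :: real^'n)"
  by (simp add: orthogonal_matrix matrix_vector_mul_assoc)

lemma inner_orthonormal3_expand:
  fixes a b c :: "real^3"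
  assumes "norm a = 1" "norm b = 1" "norm c = 1" "a \<bullet> b = 0" "a \<bullet> c = 0" "b \<bullet> c = 0"
  shows "x \<bullet> y = (a \<bullet> x) * (a \<bullet> y) + (b \<bullet> x) * (b \<bullet> y) + (c \<bullet> x) * (c \<bullet> y)"
  using orthogonal_matrix_inner[OF orthogonal_matrix_rows3[OF assms], of x y]
  by (simp add: matrix_rows3_mult inner_real3)

lemma norm_cross3_orthonormal:
  assumes "norm a = 1" "norm b = 1" "a \<bullet> b = 0"
  shows "norm (cross3 a b) = 1"
  using norm_cross_dot[of a b] assms by (simp add: norm_eq_1 power2_norm_eq_inner)

lemma unit_normal_unique:
  fixes a b y c :: "real^3"
  assumes "cross3 a b \<noteq> 0"
    and "y \<bullet> a = 0" "y \<bullet> b = 0" "norm y = 1"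
    and "c \<bullet> a = 0" "c \<bullet> b = 0" "norm c = 1"
  shows "y = c \<or> y = - c"
proof -
  define n where "n = cross3 a b"
  have parallel: "(n \<bullet> n) *\<^sub>R z = (n \<bullet> z) *\<^sub>R n" if "z \<bullet> a = 0" "z \<bullet> b = 0" for z
    using that unfolding n_def
    by (simp add: vec_eq_iff forall_3 cross3_def inner_real3) algebra
  have unit_coeff: "(n \<bullet> z)\<^sup>2 = n \<bullet> n" if "z \<bullet> a = 0" "z \<bullet> b = 0" "norm z = 1" for z
  proof -
    have "(n \<bullet> n) * (z \<bullet> z) = (n \<bullet> z) * (n \<bullet> z)"
      using arg_cong[OF parallel[OF that(1,2)], of "\<lambda>w. w \<bullet> z"] by simp
    then show ?thesis
      using that(3) by (simp add: norm_eq_1 power2_eq_square)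
  qed
  have "(n \<bullet> y)\<^sup>2 = (n \<bullet> c)\<^sup>2"
    using unit_coeff[of y] unit_coeff[of c] assms(2-7) by simp
  then have "n \<bullet> y = n \<bullet> c \<or> n \<bullet> y = - (n \<bullet> c)"
    by (simp add: power2_eq_iff)
  then have "(n \<bullet> n) *\<^sub>R y = (n \<bullet> n) *\<^sub>R c \<or> (n \<bullet> n) *\<^sub>R y = (n \<bullet> n) *\<^sub>R (- c)"
    using parallel[of y] parallel[of c] assms(2-7) by auto
  moreover have "n \<bullet> n \<noteq> 0"
    using assms(1) unfolding n_def by simp
  ultimately show ?thesis
    by (metis scaleR_cancel_left)
qed

lemma unit_inner_square_eq_one:
  fixes \<psi> a :: "'a::real_inner"
  assumes "norm \<psi> = 1" "norm a = 1" "(\<psi> \<bullet> a)\<^sup>2 = 1"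
  shows "\<psi> = a \<or> \<psi> = - a"
proof -
  have "\<bar>\<psi> \<bullet> a\<bar> = norm \<psi> * norm a"
    using assms by (auto simp: power2_eq_1_iff)
  then show ?thesis
    using assms(1,2) unfolding norm_cauchy_schwarz_abs_eq by auto
qed

lemma inner_orthonormal_cross3_expand:
  fixes a b :: "real^3"
  assumes "norm a = 1" "norm b = 1" "a \<bullet> b = 0"
  shows "x \<bullet> y = (a \<bullet> x) * (a \<bullet> y) + (b \<bullet> x) * (b \<bullet> y) + (cross3 a b \<bullet> x) * (cross3 a b \<bullet> y)"
  using assms norm_cross3_orthonormal[OF assms]
  by (intro inner_orthonormal3_expand) (simp_all add: dot_cross_self)

lemma proj_uminus: "proj (- x) = proj x"
  by (simp add: proj_def)

lemma proj_matrix_vector_mult: "proj (Q *v x) = Q ** proj x ** transpose Q"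
  by (simp add: proj_def vec_eq_iff matrix_matrix_mult_def matrix_vector_mult_def
      transpose_def sum_3 forall_3 algebra_simps)

definition clifton_gadget :: "(nat \<Rightarrow> real^3) \<Rightarrow> bool" where
  "clifton_gadget v \<longleftrightarrow> (\<forall>i\<in>{1..8}. norm (v i) = 1) \<and> (\<forall>(i, j)\<in>clifton_edges. v i \<bullet> v j = 0)"

lemma ball_atLeastAtMost_1_8:
  "(\<forall>i\<in>{1..8::nat}. P i) \<longleftrightarrow> P 1 \<and> P 2 \<and> P 3 \<and> P 4 \<and> P 5 \<and> P 6 \<and> P 7 \<and> P 8"
proof -
  have "{1..8::nat} = {1, 2, 3, 4, 5, 6, 7, 8}"
    by auto
  then show ?thesis
    by simp
qed

lemma clifton_gadgetD:
  assumes "clifton_gadget v"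
  shows "norm (v 1) = 1" "norm (v 2) = 1" "norm (v 3) = 1" "norm (v 4) = 1"
    "norm (v 5) = 1" "norm (v 6) = 1" "norm (v 7) = 1" "norm (v 8) = 1"
    and "v 1 \<bullet> v 2 = 0" "v 1 \<bullet> v 3 = 0" "v 2 \<bullet> v 4 = 0" "v 2 \<bullet> v 6 = 0"
    "v 4 \<bullet> v 6 = 0" "v 3 \<bullet> v 5 = 0" "v 3 \<bullet> v 7 = 0" "v 5 \<bullet> v 7 = 0"
    "v 4 \<bullet> v 5 = 0" "v 6 \<bullet> v 8 = 0" "v 7 \<bullet> v 8 = 0"
  using assms unfolding clifton_gadget_def ball_atLeastAtMost_1_8
  by (auto simp: clifton_edges_def)

lemma clifton_config_gadget: "clifton_config v \<psi> \<Longrightarrow> clifton_gadget v"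
  by (simp add: clifton_config_def clifton_gadget_def)

lemma clifton_config_overlap:
  assumes "clifton_config v \<psi>"
  shows "(v 1 \<bullet> v 8)\<^sup>2 = 1/9"
proof -
  have "\<psi> = v 1 \<or> \<psi> = - v 1"
    using assms by (intro unit_inner_square_eq_one) (auto simp: clifton_config_def)
  then show ?thesis
    using assms by (auto simp: clifton_config_def)
qed

lemma clifton_gadget_orthogonal_image:
  assumes "orthogonal_matrix Q" "clifton_gadget v"
  shows "clifton_gadget (\<lambda>i. Q *v v i)"
  using assms orthogonal_matrix_inner[OF assms(1)]
  by (simp add: clifton_gadget_def norm_eq_sqrt_inner)

lemma clifton_gadget_angles:
  assumes "clifton_gadget v" "(v 1 \<bullet> v 8)\<^sup>2 = 1/9"
  shows "(v 2 \<bullet> v 3)\<^sup>2 = 1/4 \<and> (v 1 \<bullet> v 4)\<^sup>2 = 1/3"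
proof -
  note v = clifton_gadgetD[OF assms(1)]
  define C where "C = cross3 (v 1) (v 2)"
  have expand_12C: "x \<bullet> y = (v 1 \<bullet> x) * (v 1 \<bullet> y)
      + (v 2 \<bullet> x) * (v 2 \<bullet> y) + (C \<bullet> x) * (C \<bullet> y)" for x y
    unfolding C_def using v by (intro inner_orthonormal_cross3_expand)
  have expand_357: "x \<bullet> y = (v 3 \<bullet> x) * (v 3 \<bullet> y)
      + (v 5 \<bullet> x) * (v 5 \<bullet> y) + (v 7 \<bullet> x) * (v 7 \<bullet> y)" for x y
    using v by (intro inner_orthonormal3_expand)
  have expand_246: "x \<bullet> y = (v 2 \<bullet> x) * (v 2 \<bullet> y)
      + (v 4 \<bullet> x) * (v 4 \<bullet> y) + (v 6 \<bullet> x) * (v 6 \<bullet> y)" for x y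
    using v by (intro inner_orthonormal3_expand)
  show ?thesis
  proof (rule clifton_angle_equations)
    show "v 4 \<bullet> v 8 = (v 3 \<bullet> v 4) * (v 3 \<bullet> v 8)"
      using expand_357[of "v 4" "v 8"] v by (simp add: inner_commute)
    show "v 3 \<bullet> v 8 = (v 2 \<bullet> v 8) * (v 2 \<bullet> v 3) + (v 4 \<bullet> v 8) * (v 3 \<bullet> v 4)"
      using expand_246[of "v 3" "v 8"] v by (simp add: inner_commute)
    show "(v 2 \<bullet> v 8)\<^sup>2 + (v 4 \<bullet> v 8)\<^sup>2 = 1"
      using expand_246[of "v 8" "v 8"] v by (simp add: norm_eq_1 power2_eq_square)
    have "v 1 \<bullet> v 8 = (v 4 \<bullet> v 8) * (v 1 \<bullet> v 4)"
      using expand_246[of "v 1" "v 8"] v by (simp add: inner_commute)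
    then show "((v 4 \<bullet> v 8) * (v 1 \<bullet> v 4))\<^sup>2 = 1/9"
      using assms(2) by simp
    show "v 3 \<bullet> v 4 = (C \<bullet> v 3) * (C \<bullet> v 4)"
      using expand_12C[of "v 3" "v 4"] v by (simp add: inner_commute)
    show "(v 2 \<bullet> v 3)\<^sup>2 + (C \<bullet> v 3)\<^sup>2 = 1"
      using expand_12C[of "v 3" "v 3"] v by (simp add: norm_eq_1 power2_eq_square)
    show "(v 1 \<bullet> v 4)\<^sup>2 + (C \<bullet> v 4)\<^sup>2 = 1"
      using expand_12C[of "v 4" "v 4"] v by (simp add: norm_eq_1 power2_eq_square inner_commute)
  qed
qed

definition clifton_std :: "nat \<Rightarrow> real^3" where
  "clifton_std i =
     (if i = 1 then vector [1, 0, 0]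
      else if i = 2 then vector [0, 1, 0]
      else if i = 3 then vector [0, 1/2, sqrt 3 / 2]
      else if i = 4 then vector [sqrt 3 / 3, 0, sqrt 2 * sqrt 3 / 3]
      else if i = 5 then vector [sqrt 3 / 3, sqrt 2 / 2, - sqrt 2 * sqrt 3 / 6]
      else if i = 6 then vector [- sqrt 2 * sqrt 3 / 3, 0, sqrt 3 / 3]
      else if i = 7 then vector [- sqrt 2 * sqrt 3 / 3, 1/2, - sqrt 3 / 6]
      else vector [1/3, sqrt 2 * sqrt 3 / 3, sqrt 2 / 3])"

lemma clifton_gadget_std: "clifton_gadget clifton_std"
  unfolding clifton_gadget_def ball_atLeastAtMost_1_8
  by (auto simp: clifton_edges_def clifton_std_def norm_eq_1 inner_real3 field_simps)

lemma clifton_std_cross_nonzero: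
  "cross3 (clifton_std 3) (clifton_std 4) \<noteq> 0" "cross3 (clifton_std 2) (clifton_std 4) \<noteq> 0"
  "cross3 (clifton_std 3) (clifton_std 5) \<noteq> 0" "cross3 (clifton_std 6) (clifton_std 7) \<noteq> 0"
  by (auto simp: clifton_std_def cross3_def vec_eq_iff forall_3)

lemma clifton_gadget_rigid:
  assumes "clifton_gadget u"
    and first_four: "\<forall>i\<in>{1..4}. u i = clifton_std i \<or> u i = - clifton_std i"
  shows "\<forall>i\<in>{1..8}. u i = clifton_std i \<or> u i = - clifton_std i"
proof -
  note u = clifton_gadgetD[OF assms(1)] and std = clifton_gadgetD[OF clifton_gadget_std]
  have normal: "u k = clifton_std k \<or> u k = - clifton_std k"
    if "u i = clifton_std i \<or> u i = - clifton_std i" "u j = clifton_std j \<or> u j = - clifton_std j"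
      "u k \<bullet> u i = 0" "u k \<bullet> u j = 0" "norm (u k) = 1"
      "clifton_std k \<bullet> clifton_std i = 0" "clifton_std k \<bullet> clifton_std j = 0"
      "norm (clifton_std k) = 1" "cross3 (clifton_std i) (clifton_std j) \<noteq> 0"
    for i j k
    using that by (intro unit_normal_unique[of "clifton_std i" "clifton_std j"]) auto
  have 1: "u 1 = clifton_std 1 \<or> u 1 = - clifton_std 1"
    and 2: "u 2 = clifton_std 2 \<or> u 2 = - clifton_std 2"
    and 3: "u 3 = clifton_std 3 \<or> u 3 = - clifton_std 3"
    and 4: "u 4 = clifton_std 4 \<or> u 4 = - clifton_std 4"
    using first_four by simp_all
  have 5: "u 5 = clifton_std 5 \<or> u 5 = - clifton_std 5"
    using normal[OF 3 4] u std clifton_std_cross_nonzero by (simp add: inner_commute)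
  have 6: "u 6 = clifton_std 6 \<or> u 6 = - clifton_std 6"
    using normal[OF 2 4] u std clifton_std_cross_nonzero by (simp add: inner_commute)
  have 7: "u 7 = clifton_std 7 \<or> u 7 = - clifton_std 7"
    using normal[OF 3 5] u std clifton_std_cross_nonzero by (simp add: inner_commute)
  have 8: "u 8 = clifton_std 8 \<or> u 8 = - clifton_std 8"
    using normal[OF 6 7] u std clifton_std_cross_nonzero by (simp add: inner_commute)
  show ?thesis
    unfolding ball_atLeastAtMost_1_8 using 1 2 3 4 5 6 7 8 by blast
qed

lemma clifton_gadget_first_four:
  assumes "clifton_gadget v" "(v 1 \<bullet> v 8)\<^sup>2 = 1/9"
  obtains Q :: "real^3^3"
  where "orthogonal_matrix Q" "\<forall>i\<in>{1..4}. Q *v v i = clifton_std i \<or> Q *v v i = - clifton_std i"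
proof -
  note v = clifton_gadgetD[OF assms(1)]
  define C where "C = cross3 (v 1) (v 2)"
  have expand_12C: "x \<bullet> y = (v 1 \<bullet> x) * (v 1 \<bullet> y)
      + (v 2 \<bullet> x) * (v 2 \<bullet> y) + (C \<bullet> x) * (C \<bullet> y)" for x y
    unfolding C_def using v by (intro inner_orthonormal_cross3_expand)
  have \<beta>: "(v 2 \<bullet> v 3)\<^sup>2 = (1/2)\<^sup>2" and p: "(v 1 \<bullet> v 4)\<^sup>2 = (sqrt 3 / 3)\<^sup>2"
    using clifton_gadget_angles[OF assms] by (simp_all add: power_divide)
  have "(C \<bullet> v 3)\<^sup>2 = 3/4"
    using expand_12C[of "v 3" "v 3"] v \<beta> by (simp add: norm_eq_1 power2_eq_square)
  then have \<gamma>: "(C \<bullet> v 3)\<^sup>2 = (sqrt 3 / 2)\<^sup>2"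
    by (simp add: power_divide)
  have "(C \<bullet> v 4)\<^sup>2 = 2/3"
    using expand_12C[of "v 4" "v 4"] v p by (simp add: norm_eq_1 power2_eq_square inner_commute)
  then have \<delta>: "(C \<bullet> v 4)\<^sup>2 = (sqrt 2 * sqrt 3 / 3)\<^sup>2"
    by (simp add: power_divide power_mult_distrib)
  \<comment> \<open>Row signs chosen so that the two nonzero coordinates of Q v3 have equal signs,
    and likewise for Q v4.\<close>
  define s where "s = sgn ((v 2 \<bullet> v 3) * (C \<bullet> v 3))"
  define t where "t = sgn ((v 1 \<bullet> v 4) * (C \<bullet> v 4))"
  have s_sign: "s = 1 \<or> s = -1" and t_sign: "t = 1 \<or> t = -1"
    using \<beta> \<gamma> p \<delta> by (auto simp: s_def t_def sgn_if)
  have C: "norm C = 1" "v 1 \<bullet> C = 0" "v 2 \<bullet> C = 0"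
    using norm_cross3_orthonormal v by (simp_all add: C_def dot_cross_self)
  define Q where "Q = (vector [t *\<^sub>R v 1, s *\<^sub>R v 2, C] :: real^3^3)"
  have "orthogonal_matrix Q"
    unfolding Q_def using v C s_sign t_sign by (intro orthogonal_matrix_rows3) auto
  have Q: "Q *v x = vector [t * (v 1 \<bullet> x), s * (v 2 \<bullet> x), C \<bullet> x]" for x
    by (simp add: Q_def matrix_rows3_mult)
  have "Q *v v 1 = t *\<^sub>R clifton_std 1" "Q *v v 2 = s *\<^sub>R clifton_std 2"
    using v C by (simp_all add: Q clifton_std_def vec_eq_iff forall_3 norm_eq_1 inner_commute)
  moreover have "Q *v v 3 = clifton_std 3 \<or> Q *v v 3 = - clifton_std 3"
    using sgn_mult_normalise[OF \<beta> \<gamma>] v unfolding s_def[symmetric]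
    by (auto simp: Q clifton_std_def vec_eq_iff forall_3)
  moreover have "Q *v v 4 = clifton_std 4 \<or> Q *v v 4 = - clifton_std 4"
    using sgn_mult_normalise[OF p \<delta>] v unfolding t_def[symmetric]
    by (auto simp: Q clifton_std_def vec_eq_iff forall_3)
  ultimately have "\<forall>i\<in>{1..4}. Q *v v i = clifton_std i \<or> Q *v v i = - clifton_std i"
    using s_sign t_sign by (auto simp: atLeastAtMostSuc_conv eval_nat_numeral)
  with \<open>orthogonal_matrix Q\<close> show thesis
    by (rule that)
qed

lemma clifton_gadget_canonical:
  assumes "clifton_gadget v" "(v 1 \<bullet> v 8)\<^sup>2 = 1/9"
  obtains Q :: "real^3^3"
  where "orthogonal_matrix Q" "\<forall>i\<in>{1..8}. Q *v v i = clifton_std i \<or> Q *v v i = - clifton_std i"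
proof -
  obtain Q where Q: "orthogonal_matrix Q"
    and "\<forall>i\<in>{1..4}. Q *v v i = clifton_std i \<or> Q *v v i = - clifton_std i"
    using clifton_gadget_first_four[OF assms] .
  moreover have "clifton_gadget (\<lambda>i. Q *v v i)"
    using clifton_gadget_orthogonal_image[OF Q assms(1)] .
  ultimately show thesis
    using that clifton_gadget_rigid by blast
qed

theorem mainTheorem5:
  fixes v w :: "nat \<Rightarrow> real^3" and psi phi :: "real^3"
  assumes "clifton_config v psi" and "clifton_config w phi"
  shows "\<exists>U :: real^3^3. orthogonal_matrix U \<and>
           ((\<forall>i\<in>{1..8}. proj (w i) = U ** proj (v i) ** transpose U) \<or>
            (\<forall>i\<in>{1..8}. proj (w (clifton_swap i)) = U ** proj (v i) ** transpose U))"
proof -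
  obtain Qv where Qv: "orthogonal_matrix Qv"
    and v: "\<forall>i\<in>{1..8}. Qv *v v i = clifton_std i \<or> Qv *v v i = - clifton_std i"
    using assms(1) clifton_gadget_canonical clifton_config_gadget clifton_config_overlap by metis
  obtain Qw where Qw: "orthogonal_matrix Qw"
    and w: "\<forall>i\<in>{1..8}. Qw *v w i = clifton_std i \<or> Qw *v w i = - clifton_std i"
    using assms(2) clifton_gadget_canonical clifton_config_gadget clifton_config_overlap by metis
  define U where "U = transpose Qw ** Qv"
  have "orthogonal_matrix U"
    unfolding U_def using Qv Qw by (simp add: orthogonal_matrix_mul)
  moreover have "U *v v i = w i \<or> U *v v i = - w i" if "i \<in> {1..8}" for i
  proof -
    have "Qv *v v i = Qw *v w i \<or> Qv *v v i = - (Qw *v w i)"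
      using bspec[OF v that] bspec[OF w that] by auto
    then show ?thesis
      unfolding U_def matrix_vector_mul_assoc[symmetric]
      by (auto simp: linear_neg orthogonal_matrix_transpose_mult_cancel[OF Qw]
          simp del: transpose_matrix_vector)
  qed
  then have "\<forall>i\<in>{1..8}. proj (w i) = U ** proj (v i) ** transpose U"
    by (metis proj_uminus proj_matrix_vector_mult)
  ultimately show ?thesis
    by blast
qed

end
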